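(* Let $\bm G\in\{0,1\}^{n\times k}$ be a partition indicator matrix, $\bm\Omega\in[0,1]^{k\times k}$ symmetric, $\bm n_g=\bm G^\top\bm1$, $\bm N_g=\operatorname{diag}(\bm n_g)=\bm G^\top\bm G$, and assume all entries of $\bm\Omega\bm n_g$ are positive. Define the normalized affinity matrix $$\bm\Gamma=\bm N_g^{1/2}\operatorname{diag}(\bm\Omega\bm n_g)^{-1/2}\,\bm\Omega\,\operatorname{diag}(\bm\Omega\bm n_g)^{-1/2}\bm N_g^{1/2},$$ and let $\bm{\mathcal L}=\operatorname{diag}(\bm{\mathcal A}\bm1)^{-1/2}\bm{\mathcal A}\operatorname{diag}(\bm{\mathcal A}\bm1)^{-1/2}$ with $\bm{\mathcal A}=\bm G\bm\Omega\bm G^\top$. If $\bm u_i$ is an eigenvector of $\bm\Gamma$ with eigenvalue $\lambda_i$, then $\bm v_i=\bm G\bm N_g^{-1/2}\bm u_i$ is an eigenvector of $\bm{\mathcal L}$ with the same eigenvalue $\lambda_i$.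
   Context: A partition indicator matrix $\bm G$ has exactly one entry $1$ in each row and each column nonzero ($G_{ij}=1$ iff node $i$ is in group $j$). $\bm1$ is the all-ones vector and $\operatorname{diag}(\bm x)$ the diagonal matrix with diagonal $\bm x$. *)

theory Defs
  imports "HOL-Analysis.Analysis"
begin

definition diagm :: "real^'n \<Rightarrow> real^'n^'n" where
  "diagm x = (\<chi> i j. if i = j then x $ i else 0)"

definition partition_indicator :: "real^'k^'n \<Rightarrow> bool" where
  "partition_indicator G \<longleftrightarrow>
     (\<forall>i j. G $ i $ j = 0 \<or> G $ i $ j = 1) \<and>
     (\<forall>i. \<exists>!j. G $ i $ j = 1) \<and>
     (\<forall>j. \<exists>i. G $ i $ j \<noteq> 0)"

definition vec_sqrt :: "real^'n \<Rightarrow> real^'n" where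
  "vec_sqrt x = (\<chi> i. sqrt (x $ i))"

definition vec_inv_sqrt :: "real^'n \<Rightarrow> real^'n" where
  "vec_inv_sqrt x = (\<chi> i. inverse (sqrt (x $ i)))"

definition ones :: "real^'n" where "ones = (\<chi> i. 1)"

definition is_eigenpair :: "real^'n^'n \<Rightarrow> real \<Rightarrow> real^'n \<Rightarrow> bool" where
  "is_eigenpair M lam v \<longleftrightarrow> v \<noteq> 0 \<and> M *v v = lam *\<^sub>R v"

end

theory Submission
  imports Defs
begin

text \<open>Since every node lies in exactly one group, \<open>G\<^sup>T G = N\<^sub>g\<close>, and multiplication by \<open>G\<close>
  only copies group values to the nodes, so it commutes with componentwise operations. Hence
  \<open>\<A>\<one> = G \<Omega> n\<^sub>g\<close>, the degree normalisation of \<open>\<L>\<close> is \<open>G\<close> applied to that of \<open>\<Gamma>\<close>, and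
  \<open>\<L> G N\<^sub>g\<^bsup>-1/2\<^esup> = G N\<^sub>g\<^bsup>-1/2\<^esup> \<Gamma>\<close>. As \<open>G N\<^sub>g\<^bsup>-1/2\<^esup>\<close> is injective, it maps
  eigenvectors of \<open>\<Gamma>\<close> to eigenvectors of \<open>\<L>\<close>.\<close>

lemma vec_inv_sqrt_times_vec_sqrt:
  assumes "\<And>i. 0 < x $ i"
  shows "vec_inv_sqrt x * vec_sqrt x = 1"
proof -
  have "sqrt (x $ i) \<noteq> 0" for i
    using assms[of i] by simp
  then show ?thesis
    by (simp add: vec_eq_iff vec_sqrt_def vec_inv_sqrt_def)
qed

lemma times_vec_inv_sqrt:
  assumes "\<And>i. 0 < x $ i"
  shows "x * vec_inv_sqrt x = vec_sqrt x"
  using assms by (simp add: vec_eq_iff vec_sqrt_def vec_inv_sqrt_def)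
    (metis divide_inverse less_imp_le real_div_sqrt)

lemma diagm_mult_vec: "diagm x *v y = x * y"
proof -
  have "(\<Sum>j\<in>UNIV. (if i = j then x $ i else 0) * y $ j) = x $ i * y $ i" for i
    by (simp add: if_distrib[where f="\<lambda>a. a * _"] cong: if_cong)
  then show ?thesis by (simp add: diagm_def matrix_vector_mult_def vec_eq_iff)
qed

lemma is_eigenpair_intertwine:
  assumes "\<And>x. L *v (P *v x) = P *v (M *v x)"
    and "\<And>x. P *v x = 0 \<Longrightarrow> x = 0"
    and "is_eigenpair M lam u"
  shows "is_eigenpair L lam (P *v u)"
  using assms unfolding is_eigenpair_def by (metis matrix_vector_mult_scaleR)

definition partition_group :: "real^'k^'n \<Rightarrow> 'n \<Rightarrow> 'k" where
  "partition_group G i = (THE j. G $ i $ j = 1)"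

lemma partition_indicator_entry:
  assumes "partition_indicator G"
  shows "G $ i $ j = (if j = partition_group G i then 1 else 0)"
proof -
  have unique: "\<exists>!j. G $ i $ j = 1"
    using assms unfolding partition_indicator_def by blast
  then have "G $ i $ partition_group G i = 1"
    unfolding partition_group_def by (rule theI')
  with unique assms show ?thesis
    unfolding partition_indicator_def by metis
qed

lemma partition_indicator_mult_vec:
  assumes "partition_indicator G"
  shows "(G *v x) $ i = x $ partition_group G i"
  by (simp add: matrix_vector_mult_def partition_indicator_entry[OF assms]
      if_distrib[where f="\<lambda>a. a * _"] cong: if_cong)

lemma partition_indicator_mult_vec_times:
  assumes "partition_indicator G"
  shows "(G *v x) * (G *v y) = G *v (x * y)"
  by (simp add: vec_eq_iff partition_indicator_mult_vec[OF assms])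

lemma partition_indicator_vec_inv_sqrt:
  assumes "partition_indicator G"
  shows "vec_inv_sqrt (G *v x) = G *v vec_inv_sqrt x"
  by (simp add: vec_eq_iff vec_inv_sqrt_def partition_indicator_mult_vec[OF assms])

lemma partition_indicator_gram:
  assumes "partition_indicator G"
  shows "transpose G *v (G *v x) = (transpose G *v ones) * x"
proof (subst vec_eq_iff, intro allI)
  fix j
  have "(transpose G *v y) $ j = (\<Sum>i\<in>UNIV. G $ i $ j * y $ i)" for y
    by (simp add: matrix_vector_mult_def transpose_def mult.commute)
  then have "(transpose G *v (G *v x)) $ j = (\<Sum>i\<in>UNIV. G $ i $ j * x $ partition_group G i)"
    by (simp only: partition_indicator_mult_vec[OF assms])
  also have "\<dots> = (\<Sum>i\<in>UNIV. G $ i $ j * x $ j)"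
    by (rule sum.cong) (simp_all add: partition_indicator_entry[OF assms])
  also have "\<dots> = ((transpose G *v ones) * x) $ j"
    by (simp add: matrix_vector_mult_def transpose_def ones_def sum_distrib_right)
  finally show "(transpose G *v (G *v x)) $ j = ((transpose G *v ones) * x) $ j" .
qed

lemma partition_indicator_group_size_pos:
  assumes "partition_indicator G"
  shows "(transpose G *v ones) $ j > 0"
proof -
  obtain i where "G $ i $ j \<noteq> 0"
    using assms unfolding partition_indicator_def by blast
  moreover have "\<forall>i. 0 \<le> G $ i $ j"
    using assms unfolding partition_indicator_def by (metis order_refl zero_le_one)
  ultimately have "0 < (\<Sum>i\<in>UNIV. G $ i $ j)"
    by (metis UNIV_I finite order_le_neq_trans sum_pos2)
  then show ?thesis
    by (simp add: matrix_vector_mult_def transpose_def ones_def)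
qed

lemma partition_indicator_mult_vec_eq_0:
  assumes "partition_indicator G" and "G *v x = 0"
  shows "x = 0"
proof (subst vec_eq_iff, intro allI)
  fix j
  obtain i where "G $ i $ j \<noteq> 0"
    using assms(1) unfolding partition_indicator_def by blast
  then have "partition_group G i = j"
    by (metis partition_indicator_entry[OF assms(1)])
  then show "x $ j = 0 $ j"
    using arg_cong[OF assms(2), of "\<lambda>v. v $ i"]
    by (simp add: partition_indicator_mult_vec[OF assms(1)])
qed

lemma partition_indicator_normalized_intertwine:
  fixes G :: "real^'k^'n"
  assumes "partition_indicator G"
  defines "n \<equiv> transpose G *v ones"
  shows "(diagm (G *v e) ** (G ** \<Omega> ** transpose G) ** diagm (G *v e))
           *v ((G ** diagm (vec_inv_sqrt n)) *v x)
         = (G ** diagm (vec_inv_sqrt n))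
           *v ((diagm (vec_sqrt n) ** diagm e ** \<Omega> ** diagm e ** diagm (vec_sqrt n)) *v x)"
proof -
  have n_pos: "\<And>j. 0 < n $ j"
    unfolding n_def by (rule partition_indicator_group_size_pos[OF assms(1)])
  have "n * (e * (vec_inv_sqrt n * x)) = e * (vec_sqrt n * x)"
    using times_vec_inv_sqrt[OF n_pos] by (metis mult.left_commute mult.assoc)
  moreover have "vec_inv_sqrt n * (vec_sqrt n * y) = y" for y :: "real^'k"
    using vec_inv_sqrt_times_vec_sqrt[OF n_pos] by (simp add: mult.assoc[symmetric])
  ultimately show ?thesis
    by (simp add: matrix_vector_mul_assoc[symmetric] diagm_mult_vec n_def
        partition_indicator_mult_vec_times[OF assms(1)] partition_indicator_gram[OF assms(1)]
        del: transpose_matrix_vector)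
qed

lemma partition_indicator_normalized_mult_vec_eq_0:
  assumes "partition_indicator G"
    and "(G ** diagm (vec_inv_sqrt (transpose G *v ones))) *v x = 0"
  shows "x = 0"
proof -
  have "vec_inv_sqrt (transpose G *v ones) * x = 0"
    using partition_indicator_mult_vec_eq_0[OF assms(1)] assms(2)
    by (simp add: matrix_vector_mul_assoc[symmetric] diagm_mult_vec del: transpose_matrix_vector)
  moreover have "vec_inv_sqrt (transpose G *v ones) $ j \<noteq> 0" for j
    using partition_indicator_group_size_pos[OF assms(1), of j]
    by (simp add: vec_inv_sqrt_def del: transpose_matrix_vector)
  ultimately show ?thesis
    by (simp add: vec_eq_iff)
qed

theorem lemmaA2:
  fixes G :: "real^'k^'n" and \<Omega> :: "real^'k^'k" and u :: "real^'k" and lam :: real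
  assumes "partition_indicator G"
    and "\<forall>a b. 0 \<le> \<Omega> $ a $ b \<and> \<Omega> $ a $ b \<le> 1"
    and "transpose \<Omega> = \<Omega>"
    and "\<forall>a. (\<Omega> *v (transpose G *v ones)) $ a > 0"
    and "is_eigenpair
           (diagm (vec_sqrt (transpose G *v ones))
            ** diagm (vec_inv_sqrt (\<Omega> *v (transpose G *v ones)))
            ** \<Omega>
            ** diagm (vec_inv_sqrt (\<Omega> *v (transpose G *v ones)))
            ** diagm (vec_sqrt (transpose G *v ones))) lam u"
  shows "is_eigenpair
           (diagm (vec_inv_sqrt ((G ** \<Omega> ** transpose G) *v ones))
            ** (G ** \<Omega> ** transpose G)
            ** diagm (vec_inv_sqrt ((G ** \<Omega> ** transpose G) *v ones)))
           lam (G *v (diagm (vec_inv_sqrt (transpose G *v ones)) *v u))"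
proof -
  define e where "e = vec_inv_sqrt (\<Omega> *v (transpose G *v ones))"
  have "(G ** \<Omega> ** transpose G) *v ones = G *v (\<Omega> *v (transpose G *v ones))"
    by (simp only: matrix_vector_mul_assoc matrix_mul_assoc)
  then have degree: "vec_inv_sqrt ((G ** \<Omega> ** transpose G) *v ones) = G *v e"
    by (simp only: e_def partition_indicator_vec_inv_sqrt[OF assms(1)])
  have "is_eigenpair (diagm (G *v e) ** (G ** \<Omega> ** transpose G) ** diagm (G *v e))
      lam ((G ** diagm (vec_inv_sqrt (transpose G *v ones))) *v u)"
    unfolding e_def
    by (rule is_eigenpair_intertwine[OF partition_indicator_normalized_intertwine[OF assms(1)]
        partition_indicator_normalized_mult_vec_eq_0[OF assms(1)] assms(5)])
  then show ?thesis
    by (simp only: degree matrix_vector_mul_assoc)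
qed

end
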